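(* Let $M$ be a sofic monoid, let $\Sigma=(D_i,\sigma_i)_{i\in I}$ be a sofic approximation of $M$, and let $A$ be a finite set. Then $h_\Sigma(A^M,M,\rho)=\log|A|$, where $\rho$ is the pseudometric on $A^M$ given by $\rho(x,y)=0$ if $x(1_M)=y(1_M)$ and $\rho(x,y)=1$ otherwise.
   Context: $A^M$ is the set of maps $M\to A$ with the prodiscrete topology and shift action $(mx)(m')=x(m'm)$. Hamming metric on $\operatorname{Map}(D)$ (maps $D\to D$, $D$ finite non-empty): $d_D^{\mathrm{Ham}}(f,g)=\frac{1}{|D|}|\{v:f(v)\ne g(v)\}|$. A sofic approximation of $M$ is a net $(D_i,\sigma_i)_{i\in I}$ over a directed set, $D_i$ non-empty finite, $\sigma_i\colon M\to\operatorname{Map}(D_i)$, with $\sigma_i(1_M)=\mathrm{Id}_{D_i}$, $\lim_i d^{\mathrm{Ham}}_{D_i}(\sigma_i(m_1m_2),\sigma_i(m_1)\sigma_i(m_2))=0$ for all $m_1,m_2$, and $\lim_i d^{\mathrm{Ham}}_{D_i}(\sigma_i(m_1),\sigma_i(m_2))=1$ for distinct $m_1,m_2$; $M$ is sofic iff it admits one. For a compact space $X$ with continuous $M$-action and continuous pseudometric $\rho$, and non-empty finite $D$: on $X^D$, $\rho_2^D(\varphi,\psi)=(\frac{1}{|D|}\sum_v\rho(\varphi(v),\psi(v))^2)^{1/2}$, $\rho_\infty^D(\varphi,\psi)=\max_v\rho(\varphi(v),\psi(v))$, $(m\varphi)(v)=m\varphi(v)$; for finite $F\subset M$, $\delta>0$,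 $\sigma\colon M\to\operatorname{Map}(D)$: $\operatorname{Map}(X,M,\rho,F,\delta,\sigma)=\{\varphi\in X^D:\rho_2^D(\varphi\circ\sigma(m),m\varphi)\le\delta\ \forall m\in F\}$. $N_\varepsilon(Z,d)$ is the maximal cardinality of a subset of $Z$ with pairwise $d$-distances $\ge\varepsilon$. $h_\Sigma(X,M,\rho)=\sup_{\varepsilon>0}\inf_F\inf_{\delta>0}\limsup_i\frac{1}{|D_i|}\log N_\varepsilon(\operatorname{Map}(X,M,\rho,F,\delta,\sigma_i),\rho_\infty^{D_i})$, infimum over finite $F\subset M$, $\log 0=-\infty$. *)

theory Defs
  imports "HOL-Analysis.Analysis" "HOL-Library.FuncSet" "HOL-Library.Extended_Real"
    "HOL-Library.Liminf_Limsup"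
begin

definition directed_set :: "'i set \<Rightarrow> ('i \<Rightarrow> 'i \<Rightarrow> bool) \<Rightarrow> bool" where
  "directed_set I le \<longleftrightarrow> I \<noteq> {} \<and> (\<forall>i\<in>I. le i i)
     \<and> (\<forall>i\<in>I. \<forall>j\<in>I. \<forall>k\<in>I. le i j \<longrightarrow> le j k \<longrightarrow> le i k)
     \<and> (\<forall>i\<in>I. \<forall>j\<in>I. \<exists>k\<in>I. le i k \<and> le j k)"

definition net_filter :: "'i set \<Rightarrow> ('i \<Rightarrow> 'i \<Rightarrow> bool) \<Rightarrow> 'i filter" where
  "net_filter I le = (INF i\<in>I. principal {j\<in>I. le i j})"

definition ham_dist :: "'d set \<Rightarrow> ('d \<Rightarrow> 'd) \<Rightarrow> ('d \<Rightarrow> 'd) \<Rightarrow> real" where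
  "ham_dist D f g = real (card {v\<in>D. f v \<noteq> g v}) / real (card D)"

definition sofic_approx ::
  "'i set \<Rightarrow> ('i \<Rightarrow> 'i \<Rightarrow> bool) \<Rightarrow> ('i \<Rightarrow> 'd set) \<Rightarrow> ('i \<Rightarrow> 'm::monoid_mult \<Rightarrow> 'd \<Rightarrow> 'd) \<Rightarrow> bool" where
  "sofic_approx I le D \<sigma> \<longleftrightarrow> directed_set I le
     \<and> (\<forall>i\<in>I. finite (D i) \<and> D i \<noteq> {} \<and> (\<forall>m. \<sigma> i m ` D i \<subseteq> D i)
              \<and> (\<forall>v\<in>D i. \<sigma> i 1 v = v))
     \<and> (\<forall>m1 m2. ((\<lambda>i. ham_dist (D i) (\<sigma> i (m1 * m2)) (\<sigma> i m1 \<circ> \<sigma> i m2)) \<longlongrightarrow> 0)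
                 (net_filter I le))
     \<and> (\<forall>m1 m2. m1 \<noteq> m2 \<longrightarrow> ((\<lambda>i. ham_dist (D i) (\<sigma> i m1) (\<sigma> i m2)) \<longlongrightarrow> 1)
                 (net_filter I le))"

definition rho2 :: "'d set \<Rightarrow> ('x \<Rightarrow> 'x \<Rightarrow> real) \<Rightarrow> ('d \<Rightarrow> 'x) \<Rightarrow> ('d \<Rightarrow> 'x) \<Rightarrow> real" where
  "rho2 D \<rho> \<phi> \<psi> = sqrt ((\<Sum>v\<in>D. (\<rho> (\<phi> v) (\<psi> v))\<^sup>2) / real (card D))"

definition rho_inf :: "'d set \<Rightarrow> ('x \<Rightarrow> 'x \<Rightarrow> real) \<Rightarrow> ('d \<Rightarrow> 'x) \<Rightarrow> ('d \<Rightarrow> 'x) \<Rightarrow> real" where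
  "rho_inf D \<rho> \<phi> \<psi> = Max ((\<lambda>v. \<rho> (\<phi> v) (\<psi> v)) ` D)"

text \<open>Map(X, M, rho, F, delta, sigma), with X^D realised as extensional functions D \<rightarrow> X.\<close>
definition Map_set ::
  "'x set \<Rightarrow> ('m \<Rightarrow> 'x \<Rightarrow> 'x) \<Rightarrow> ('x \<Rightarrow> 'x \<Rightarrow> real) \<Rightarrow> 'm set \<Rightarrow> real
   \<Rightarrow> 'd set \<Rightarrow> ('m \<Rightarrow> 'd \<Rightarrow> 'd) \<Rightarrow> ('d \<Rightarrow> 'x) set" where
  "Map_set X act \<rho> F \<delta> D \<sigma> =
     {\<phi> \<in> D \<rightarrow>\<^sub>E X. \<forall>m\<in>F. rho2 D \<rho> (\<phi> \<circ> \<sigma> m) (\<lambda>v. act m (\<phi> v)) \<le> \<delta>}"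

definition sep_num :: "real \<Rightarrow> 'z set \<Rightarrow> ('z \<Rightarrow> 'z \<Rightarrow> real) \<Rightarrow> enat" where
  "sep_num \<epsilon> Z d = (SUP S\<in>{S. S \<subseteq> Z \<and> finite S \<and> (\<forall>x\<in>S. \<forall>y\<in>S. x \<noteq> y \<longrightarrow> \<epsilon> \<le> d x y)}.
                      enat (card S))"

definition elog :: "enat \<Rightarrow> ereal" where
  "elog n = (case n of enat k \<Rightarrow> (if k = 0 then -\<infinity> else ereal (ln (real k))) | \<infinity> \<Rightarrow> \<infinity>)"

definition sofic_entropy ::
  "'i set \<Rightarrow> ('i \<Rightarrow> 'i \<Rightarrow> bool) \<Rightarrow> ('i \<Rightarrow> 'd set) \<Rightarrow> ('i \<Rightarrow> 'm \<Rightarrow> 'd \<Rightarrow> 'd)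
   \<Rightarrow> 'x set \<Rightarrow> ('m \<Rightarrow> 'x \<Rightarrow> 'x) \<Rightarrow> ('x \<Rightarrow> 'x \<Rightarrow> real) \<Rightarrow> ereal" where
  "sofic_entropy I le D \<sigma> X act \<rho> =
     (SUP \<epsilon>\<in>{0<..}. INF F\<in>{F. finite F}. INF \<delta>\<in>{0<..}.
        Limsup (net_filter I le)
          (\<lambda>i. elog (sep_num \<epsilon> (Map_set X act \<rho> F \<delta> (D i) (\<sigma> i)) (rho_inf (D i) \<rho>))
               / ereal (real (card (D i)))))"

definition full_shift :: "'a set \<Rightarrow> ('m \<Rightarrow> 'a) set" where
  "full_shift A = {x. \<forall>m. x m \<in> A}"

definition shift_act :: "'m::monoid_mult \<Rightarrow> ('m \<Rightarrow> 'a) \<Rightarrow> ('m \<Rightarrow> 'a)" where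
  "shift_act m x = (\<lambda>m'. x (m' * m))"

definition rho_one :: "('m::monoid_mult \<Rightarrow> 'a) \<Rightarrow> ('m \<Rightarrow> 'a) \<Rightarrow> real" where
  "rho_one x y = (if x 1 = y 1 then 0 else 1)"

end

theory Submission
  imports Defs
begin

text \<open>Since rho_one only sees the coordinate at 1, the rho_inf-distance of two maps
  D -> A^M is 0 or 1 according to whether their 1-coordinates agree on all of D. Hence an
  epsilon-separated set injects into A^D and has at most |A|^|D| elements. Conversely every
  pattern omega : D -> A yields the map v |-> (m |-> omega (sigma m v)), whose 1-coordinates are
  exactly equivariant, so it lies in every Map(F, delta, sigma); these maps are pairwise
  1-separated. So for epsilon <= 1 the separation number is exactly |A|^|D|, and its normalised
  logarithm is log |A|.\<close>

lemma eventually_net_filter: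
  assumes "directed_set I le"
  shows "eventually P (net_filter I le) \<longleftrightarrow> (\<exists>i\<in>I. \<forall>j\<in>I. le i j \<longrightarrow> P j)"
proof -
  have "eventually P (net_filter I le) \<longleftrightarrow> (\<exists>i\<in>I. eventually P (principal {j\<in>I. le i j}))"
    unfolding net_filter_def
  proof (rule eventually_INF_base)
    show "I \<noteq> {}" using assms unfolding directed_set_def by blast
  next
    fix a b assume "a \<in> I" "b \<in> I"
    with assms obtain k where "k \<in> I" "le a k" "le b k"
      unfolding directed_set_def by blast
    with \<open>a \<in> I\<close> \<open>b \<in> I\<close> assms have "{j\<in>I. le k j} \<subseteq> {j\<in>I. le a j} \<inter> {j\<in>I. le b j}"
      unfolding directed_set_def by blast
    with \<open>k \<in> I\<close> show "\<exists>k\<in>I. principal {j\<in>I. le k j}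
        \<le> inf (principal {j\<in>I. le a j}) (principal {j\<in>I. le b j})"
      by (auto simp: inf_principal)
  qed
  then show ?thesis by (auto simp: eventually_principal)
qed

lemma eventually_mem_net_filter:
  assumes "directed_set I le"
  shows "eventually (\<lambda>i. i \<in> I) (net_filter I le)"
  using assms unfolding eventually_net_filter[OF assms] directed_set_def by blast

lemma net_filter_ne_bot:
  assumes "directed_set I le"
  shows "net_filter I le \<noteq> bot"
  using assms unfolding trivial_limit_def eventually_net_filter[OF assms] directed_set_def by blast

lemma card_le_sep_num:
  assumes "S \<subseteq> Z" "finite S" "\<And>x y. x \<in> S \<Longrightarrow> y \<in> S \<Longrightarrow> x \<noteq> y \<Longrightarrow> \<epsilon> \<le> d x y"
  shows "enat (card S) \<le> sep_num \<epsilon> Z d"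
  unfolding sep_num_def by (rule SUP_upper) (use assms in auto)

lemma sep_num_le_card:
  assumes "finite T" "g ` Z \<subseteq> T"
    and "\<And>x y. x \<in> Z \<Longrightarrow> y \<in> Z \<Longrightarrow> x \<noteq> y \<Longrightarrow> g x = g y \<Longrightarrow> d x y < \<epsilon>"
  shows "sep_num \<epsilon> Z d \<le> enat (card T)"
  unfolding sep_num_def
proof (rule SUP_least)
  fix S assume "S \<in> {S. S \<subseteq> Z \<and> finite S \<and> (\<forall>x\<in>S. \<forall>y\<in>S. x \<noteq> y \<longrightarrow> \<epsilon> \<le> d x y)}"
  then have "S \<subseteq> Z" and "inj_on g S"
    using assms(3) by (fastforce intro: inj_onI)+
  then have "card S \<le> card T"
    using assms(1,2) by (meson card_inj_on_le image_mono order_trans)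
  then show "enat (card S) \<le> enat (card T)" by simp
qed

lemma rho_inf_rho_one:
  assumes "finite D" "D \<noteq> {}"
  shows "rho_inf D rho_one \<phi> \<psi> = (if \<forall>v\<in>D. \<phi> v 1 = \<psi> v 1 then 0 else 1)"
proof -
  have "(\<lambda>v. rho_one (\<phi> v) (\<psi> v)) ` D =
      (if \<forall>v\<in>D. \<phi> v 1 = \<psi> v 1 then {0}
       else if \<forall>v\<in>D. \<phi> v 1 \<noteq> \<psi> v 1 then {1} else {0, 1})"
    using assms(2) by (auto simp: rho_one_def)
  then show ?thesis by (auto simp: rho_inf_def)
qed

lemma sep_num_full_shift_le:
  fixes Z :: "('d \<Rightarrow> 'm::monoid_mult \<Rightarrow> 'a) set"
  assumes "finite A" "finite D" "D \<noteq> {}" "\<epsilon> > 0" "Z \<subseteq> D \<rightarrow>\<^sub>E full_shift A"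
  shows "sep_num \<epsilon> Z (rho_inf D rho_one) \<le> enat (card A ^ card D)"
proof -
  have "sep_num \<epsilon> Z (rho_inf D rho_one) \<le> enat (card (D \<rightarrow>\<^sub>E A))"
  proof (rule sep_num_le_card[where g = "\<lambda>\<phi>. restrict (\<lambda>v. \<phi> v 1) D"])
    show "finite (D \<rightarrow>\<^sub>E A)" by (simp add: assms(1,2) finite_PiE)
    show "(\<lambda>\<phi>. restrict (\<lambda>v. \<phi> v 1) D) ` Z \<subseteq> D \<rightarrow>\<^sub>E A"
      using assms(5) by (force simp: full_shift_def PiE_iff)
    fix \<phi> \<psi> :: "'d \<Rightarrow> 'm \<Rightarrow> 'a"
    assume "restrict (\<lambda>v. \<phi> v 1) D = restrict (\<lambda>v. \<psi> v 1) D"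
    then have "\<forall>v\<in>D. \<phi> v 1 = \<psi> v 1" by (metis restrict_apply')
    then show "rho_inf D rho_one \<phi> \<psi> < \<epsilon>"
      using assms(2-4) by (simp add: rho_inf_rho_one)
  qed
  then show ?thesis using assms(2) by (simp add: card_PiE)
qed

definition config_of_pattern :: "('m \<Rightarrow> 'd \<Rightarrow> 'd) \<Rightarrow> 'd set \<Rightarrow> ('d \<Rightarrow> 'a) \<Rightarrow> 'd \<Rightarrow> 'm \<Rightarrow> 'a" where
  "config_of_pattern \<sigma> D \<omega> = (\<lambda>v\<in>D. \<lambda>m. \<omega> (\<sigma> m v))"

lemma config_of_pattern_one:
  "v \<in> D \<Longrightarrow> \<sigma> 1 v = v \<Longrightarrow> config_of_pattern \<sigma> D \<omega> v 1 = \<omega> v"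
  by (simp add: config_of_pattern_def)

lemma config_of_pattern_in_Map_set:
  fixes \<sigma> :: "'m::monoid_mult \<Rightarrow> 'd \<Rightarrow> 'd"
  assumes "\<And>m. \<sigma> m ` D \<subseteq> D" "\<And>v. v \<in> D \<Longrightarrow> \<sigma> 1 v = v" "\<omega> \<in> D \<rightarrow>\<^sub>E A" "\<delta> \<ge> 0"
  shows "config_of_pattern \<sigma> D \<omega> \<in> Map_set (full_shift A) shift_act rho_one F \<delta> D \<sigma>"
proof -
  let ?\<phi> = "config_of_pattern \<sigma> D \<omega>"
  have "?\<phi> \<in> D \<rightarrow>\<^sub>E full_shift A"
    using assms(1,3) by (fastforce simp: config_of_pattern_def full_shift_def)
  moreover have "rho_one ((?\<phi> \<circ> \<sigma> m) v) (shift_act m (?\<phi> v)) = 0" if "v \<in> D" for m v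
    using assms(1,2) that by (force simp: rho_one_def shift_act_def config_of_pattern_def)
  ultimately show ?thesis
    using assms(4) by (simp add: Map_set_def rho2_def)
qed

lemma card_le_sep_num_full_shift:
  fixes \<sigma> :: "'m::monoid_mult \<Rightarrow> 'd \<Rightarrow> 'd"
  assumes "finite A" "finite D" "\<And>m. \<sigma> m ` D \<subseteq> D" "\<And>v. v \<in> D \<Longrightarrow> \<sigma> 1 v = v"
    and "\<epsilon> \<le> 1" "\<delta> \<ge> 0"
  shows "enat (card A ^ card D)
    \<le> sep_num \<epsilon> (Map_set (full_shift A) shift_act rho_one F \<delta> D \<sigma>) (rho_inf D rho_one)"
proof -
  let ?S = "config_of_pattern \<sigma> D ` (D \<rightarrow>\<^sub>E A)"
  have inj: "inj_on (config_of_pattern \<sigma> D) (D \<rightarrow>\<^sub>E A)"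
  proof (rule inj_onI, rule PiE_ext)
    fix \<omega> \<omega>' v assume "config_of_pattern \<sigma> D \<omega> = config_of_pattern \<sigma> D \<omega>'" "v \<in> D"
    then show "\<omega> v = \<omega>' v" using assms(4) by (metis config_of_pattern_one)
  qed
  have "enat (card ?S) \<le> sep_num \<epsilon> (Map_set (full_shift A) shift_act rho_one F \<delta> D \<sigma>) (rho_inf D rho_one)"
  proof (rule card_le_sep_num)
    show "?S \<subseteq> Map_set (full_shift A) shift_act rho_one F \<delta> D \<sigma>"
      using assms(3,4,6) by (auto intro: config_of_pattern_in_Map_set)
    show "finite ?S" using assms(1,2) by (simp add: finite_PiE)
    fix \<phi> \<psi> assume "\<phi> \<in> ?S" "\<psi> \<in> ?S" "\<phi> \<noteq> \<psi>"
    then obtain \<omega> \<omega>' where "\<omega> \<in> D \<rightarrow>\<^sub>E A" "\<omega>' \<in> D \<rightarrow>\<^sub>E A" "\<omega> \<noteq> \<omega>'"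
      and "\<phi> = config_of_pattern \<sigma> D \<omega>" "\<psi> = config_of_pattern \<sigma> D \<omega>'"
      by blast
    then obtain v where "v \<in> D" "\<phi> v 1 \<noteq> \<psi> v 1"
      using assms(4) by (metis PiE_ext config_of_pattern_one)
    then show "\<epsilon> \<le> rho_inf D rho_one \<phi> \<psi>"
      using assms(2,5) by (subst rho_inf_rho_one) auto
  qed
  then show ?thesis using assms(2) by (simp add: card_image[OF inj] card_PiE)
qed

lemma elog_mono: "m \<le> n \<Longrightarrow> elog m \<le> elog n"
  by (cases m; cases n) (auto simp: elog_def)

lemma elog_power_div: "n > 0 \<Longrightarrow> elog (enat (k ^ n)) / ereal (real n) = elog (enat k)"
  by (cases "k = 0") (auto simp: elog_def ln_realpow)

definition sep_rate ::
  "real \<Rightarrow> 'x set \<Rightarrow> ('m \<Rightarrow> 'x \<Rightarrow> 'x) \<Rightarrow> ('x \<Rightarrow> 'x \<Rightarrow> real) \<Rightarrow> 'm set \<Rightarrow> real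
   \<Rightarrow> 'd set \<Rightarrow> ('m \<Rightarrow> 'd \<Rightarrow> 'd) \<Rightarrow> ereal" where
  "sep_rate \<epsilon> X act \<rho> F \<delta> D \<sigma> =
     elog (sep_num \<epsilon> (Map_set X act \<rho> F \<delta> D \<sigma>) (rho_inf D \<rho>)) / ereal (real (card D))"

lemma sofic_entropy_sep_rate:
  "sofic_entropy I le D \<sigma> X act \<rho> = (SUP \<epsilon>\<in>{0<..}. INF F\<in>{F. finite F}. INF \<delta>\<in>{0<..}.
     Limsup (net_filter I le) (\<lambda>i. sep_rate \<epsilon> X act \<rho> F \<delta> (D i) (\<sigma> i)))"
  by (simp add: sofic_entropy_def sep_rate_def)

lemma sofic_entropy_le:
  assumes "\<And>\<epsilon>. \<epsilon> > 0 \<Longrightarrow> \<exists>F \<delta>. finite F \<and> \<delta> > 0 \<and>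
      (\<forall>\<^sub>F i in net_filter I le. sep_rate \<epsilon> X act \<rho> F \<delta> (D i) (\<sigma> i) \<le> c)"
  shows "sofic_entropy I le D \<sigma> X act \<rho> \<le> c"
  unfolding sofic_entropy_sep_rate
proof (rule SUP_least)
  fix \<epsilon> :: real assume "\<epsilon> \<in> {0<..}"
  then have "\<epsilon> > 0" by simp
  from assms[OF this] obtain F \<delta> where "finite F" "\<delta> > 0"
    and ev: "\<forall>\<^sub>F i in net_filter I le. sep_rate \<epsilon> X act \<rho> F \<delta> (D i) (\<sigma> i) \<le> c"
    by blast
  show "(INF F\<in>{F. finite F}. INF \<delta>\<in>{0<..}.
      Limsup (net_filter I le) (\<lambda>i. sep_rate \<epsilon> X act \<rho> F \<delta> (D i) (\<sigma> i))) \<le> c"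
    by (rule INF_lower2[of F], simp add: \<open>finite F\<close>, rule INF_lower2[of \<delta>],
        simp add: \<open>\<delta> > 0\<close>, rule Limsup_bounded[OF ev])
qed

lemma sofic_entropy_ge:
  assumes "net_filter I le \<noteq> bot" "\<epsilon> > 0"
    and "\<And>F \<delta>. finite F \<Longrightarrow> \<delta> > 0 \<Longrightarrow>
      \<forall>\<^sub>F i in net_filter I le. c \<le> sep_rate \<epsilon> X act \<rho> F \<delta> (D i) (\<sigma> i)"
  shows "c \<le> sofic_entropy I le D \<sigma> X act \<rho>"
  unfolding sofic_entropy_sep_rate
proof (rule SUP_upper2[of \<epsilon>])
  show "\<epsilon> \<in> {0<..}" using assms(2) by simp
  show "c \<le> (INF F\<in>{F. finite F}. INF \<delta>\<in>{0<..}.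
      Limsup (net_filter I le) (\<lambda>i. sep_rate \<epsilon> X act \<rho> F \<delta> (D i) (\<sigma> i)))"
    by (intro INF_greatest le_Limsup[OF assms(1)] assms(3)) simp_all
qed

lemma sep_rate_full_shift_le:
  assumes "finite A" "finite D" "D \<noteq> {}" "\<epsilon> > 0"
  shows "sep_rate \<epsilon> (full_shift A) shift_act rho_one F \<delta> D \<sigma> \<le> elog (enat (card A))"
proof -
  have "Map_set (full_shift A) shift_act rho_one F \<delta> D \<sigma> \<subseteq> D \<rightarrow>\<^sub>E full_shift A"
    by (auto simp: Map_set_def)
  with assms have "elog (sep_num \<epsilon> (Map_set (full_shift A) shift_act rho_one F \<delta> D \<sigma>)
      (rho_inf D rho_one)) \<le> elog (enat (card A ^ card D))"
    by (intro elog_mono sep_num_full_shift_le)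
  moreover have "card D > 0" using assms(2,3) by (simp add: card_gt_0_iff)
  ultimately show ?thesis unfolding sep_rate_def
    by (metis elog_power_div ereal_divide_right_mono ereal_less(2) of_nat_0_less_iff)
qed

lemma sep_rate_full_shift_eq:
  fixes \<sigma> :: "'m::monoid_mult \<Rightarrow> 'd \<Rightarrow> 'd"
  assumes "finite A" "finite D" "D \<noteq> {}" "\<And>m. \<sigma> m ` D \<subseteq> D" "\<And>v. v \<in> D \<Longrightarrow> \<sigma> 1 v = v"
    and "0 < \<epsilon>" "\<epsilon> \<le> 1" "\<delta> \<ge> 0"
  shows "sep_rate \<epsilon> (full_shift A) shift_act rho_one F \<delta> D \<sigma> = elog (enat (card A))"
proof -
  let ?Map = "Map_set (full_shift A) shift_act rho_one F \<delta> D \<sigma>"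
  have "?Map \<subseteq> D \<rightarrow>\<^sub>E full_shift A"
    by (auto simp: Map_set_def)
  then have "sep_num \<epsilon> ?Map (rho_inf D rho_one) \<le> enat (card A ^ card D)"
    using assms(1-3,6) by (rule sep_num_full_shift_le[rotated 4])
  moreover have "enat (card A ^ card D) \<le> sep_num \<epsilon> ?Map (rho_inf D rho_one)"
    using assms(1,2,4,5,7,8) by (rule card_le_sep_num_full_shift)
  ultimately have "sep_num \<epsilon> ?Map (rho_inf D rho_one) = enat (card A ^ card D)"
    by (rule antisym)
  moreover have "card D > 0" using assms(2,3) by (simp add: card_gt_0_iff)
  ultimately show ?thesis unfolding sep_rate_def by (simp only: elog_power_div)
qed

theorem lemma5p2:
  fixes I :: "'i set" and le :: "'i \<Rightarrow> 'i \<Rightarrow> bool" and D :: "'i \<Rightarrow> 'd set"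
    and \<sigma> :: "'i \<Rightarrow> 'm::monoid_mult \<Rightarrow> 'd \<Rightarrow> 'd" and A :: "'a set"
  assumes "sofic_approx I le D \<sigma>"
    and "finite A"
  shows "sofic_entropy I le D \<sigma> (full_shift A) (shift_act :: 'm \<Rightarrow> ('m \<Rightarrow> 'a) \<Rightarrow> ('m \<Rightarrow> 'a)) rho_one
           = elog (enat (card A))"
proof -
  have dir: "directed_set I le"
    and fin: "\<And>i. i \<in> I \<Longrightarrow> finite (D i)" and ne: "\<And>i. i \<in> I \<Longrightarrow> D i \<noteq> {}"
    and closed: "\<And>i m. i \<in> I \<Longrightarrow> \<sigma> i m ` D i \<subseteq> D i"
    and unital: "\<And>i v. i \<in> I \<Longrightarrow> v \<in> D i \<Longrightarrow> \<sigma> i 1 v = v"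
    using assms(1) unfolding sofic_approx_def by auto
  note eventually_in_I = eventually_mono[OF eventually_mem_net_filter[OF dir]]
  let ?rate = "\<lambda>\<epsilon> F \<delta> i. sep_rate \<epsilon> (full_shift A) shift_act rho_one F \<delta> (D i) (\<sigma> i)"
  have "\<forall>\<^sub>F i in net_filter I le. ?rate \<epsilon> F \<delta> i \<le> elog (enat (card A))" if "\<epsilon> > 0" for \<epsilon> F \<delta>
    by (rule eventually_in_I, rule sep_rate_full_shift_le) (simp_all add: assms(2) fin ne that)
  then have "sofic_entropy I le D \<sigma> (full_shift A) shift_act rho_one \<le> elog (enat (card A))"
    by (intro sofic_entropy_le) (meson finite.emptyI zero_less_one)
  moreover have "\<forall>\<^sub>F i in net_filter I le. elog (enat (card A)) \<le> ?rate 1 F \<delta> i" if "\<delta> > 0" for F \<delta>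
    by (rule eventually_in_I, rule eq_refl, rule sym, rule sep_rate_full_shift_eq)
      (simp_all add: assms(2) fin ne closed unital less_imp_le[OF that])
  then have "elog (enat (card A)) \<le> sofic_entropy I le D \<sigma> (full_shift A) shift_act rho_one"
    by (intro sofic_entropy_ge[OF net_filter_ne_bot[OF dir] zero_less_one])
  ultimately show ?thesis by (rule antisym)
qed

end
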